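(* Any robust protocol over an erasure channel has a fixed order of speaking.
   Context: An erasure channel over alphabet $\Sigma$ is a channel $\Sigma\to\Sigma\cup\{\bot\}$ in which the adversary may only replace a transmitted symbol by the erasure mark $\bot$; there is no feedback. In each round exactly one party (Alice, holding input $x$, or Bob, holding input $y$) sends one symbol. A protocol is robust if (1) for all inputs it runs for a fixed number $N$ of rounds and (2) at every round, for all inputs and every possible erasure pattern, the parties agree on who speaks next. It has a fixed order of speaking if there is a function $g:\mathbb{N}\to\{\text{Alice},\text{Bob}\}$ such that the speaker at round $i$ is $g(i)$, independent of the inputs and of the erasure pattern. *)

theory Defs
  imports Main
begin

datatype party = Alice | Bob

text \<open>One entry of a party's local view of a round: either it sent a symbol,
  or it listened and received a symbol or the erasure mark (None = bottom).\<close>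
datatype 'a event = Sent 'a | Recv "'a option"

text \<open>Each party decides, from its input and its local view (whose length is the round
  index), who it believes speaks next and, if it speaks, what symbol it sends.\<close>
record ('x, 'y, 'a) protocol =
  nextA :: "'x \<Rightarrow> 'a event list \<Rightarrow> party"
  nextB :: "'y \<Rightarrow> 'a event list \<Rightarrow> party"
  msgA  :: "'x \<Rightarrow> 'a event list \<Rightarrow> 'a"
  msgB  :: "'y \<Rightarrow> 'a event list \<Rightarrow> 'a"
  rounds :: nat

text \<open>The sender of a round is taken from Alice's belief; robustness below requires
  Bob to agree at every round.\<close>
fun run :: "('x, 'y, 'a, 'z) protocol_scheme \<Rightarrow> 'x \<Rightarrow> 'y \<Rightarrow> (nat \<Rightarrow> bool) \<Rightarrow> nat
            \<Rightarrow> 'a event list \<times> 'a event list" where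
  "run P x y e 0 = ([], [])"
| "run P x y e (Suc n) =
     (let (va, vb) = run P x y e n in
      if nextA P x va = Alice then
        (let s = msgA P x va in (va @ [Sent s], vb @ [Recv (if e n then None else Some s)]))
      else
        (let s = msgB P y vb in (va @ [Recv (if e n then None else Some s)], vb @ [Sent s])))"

definition speaker :: "('x, 'y, 'a, 'z) protocol_scheme \<Rightarrow> 'x \<Rightarrow> 'y \<Rightarrow> (nat \<Rightarrow> bool) \<Rightarrow> nat \<Rightarrow> party" where
  "speaker P x y e n = nextA P x (fst (run P x y e n))"

definition robust :: "('x, 'y, 'a, 'z) protocol_scheme \<Rightarrow> bool" where
  "robust P \<longleftrightarrow> (\<forall>x y e n. n < rounds P \<longrightarrow>
      nextA P x (fst (run P x y e n)) = nextB P y (snd (run P x y e n)))"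

definition fixed_order :: "('x, 'y, 'a, 'z) protocol_scheme \<Rightarrow> bool" where
  "fixed_order P \<longleftrightarrow> (\<exists>g :: nat \<Rightarrow> party. \<forall>x y e n. n < rounds P \<longrightarrow> speaker P x y e n = g n)"

end

theory Submission
  imports Defs
begin

text \<open>By induction on the round n, assuming the speaker of every earlier round is
  independent of inputs and erasures. Under total erasure each party's view then depends
  only on its own input, so robustness lets us swap Alice's input and then Bob's input
  without changing the next speaker. To reach total erasure from an arbitrary pattern,
  erase the rounds one at a time from the last: when the pattern changes only at round j
  and everything after j is erased, the speaker of round j keeps an unchanged view up to
  round n (the other party's later messages are lost in both runs), and robustness
  transfers its belief to the other party.\<close>

definition order_fixed_below :: "('x, 'y, 'a, 'z) protocol_scheme \<Rightarrow> nat \<Rightarrow> bool" where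
  "order_fixed_below P n \<longleftrightarrow>
     (\<forall>m<n. \<forall>x y e x' y' e'. speaker P x y e m = speaker P x' y' e' m)"

lemma fst_run_Suc:
  "fst (run P x y e (Suc n)) =
    (if speaker P x y e n = Alice
     then fst (run P x y e n) @ [Sent (msgA P x (fst (run P x y e n)))]
     else fst (run P x y e n) @ [Recv (if e n then None else Some (msgB P y (snd (run P x y e n))))])"
  by (simp add: speaker_def Let_def case_prod_unfold)

lemma snd_run_Suc:
  "snd (run P x y e (Suc n)) =
    (if speaker P x y e n = Alice
     then snd (run P x y e n) @ [Recv (if e n then None else Some (msgA P x (fst (run P x y e n))))]
     else snd (run P x y e n) @ [Sent (msgB P y (snd (run P x y e n)))])"
  by (simp add: speaker_def Let_def case_prod_unfold)

lemma run_cong_erasures: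
  "(\<And>i. i < n \<Longrightarrow> e i = e' i) \<Longrightarrow> run P x y e n = run P x y e' n"
  by (induction n) (auto simp: Let_def case_prod_unfold)

lemma fst_run_eq_if_Bob_rounds_erased:
  assumes "k \<le> n"
    and "fst (run P x y1 e1 k) = fst (run P x y2 e2 k)"
    and "\<And>m. k \<le> m \<Longrightarrow> m < n \<Longrightarrow> speaker P x y1 e1 m = speaker P x y2 e2 m \<and>
          (speaker P x y1 e1 m = Bob \<longrightarrow> e1 m \<and> e2 m)"
  shows "fst (run P x y1 e1 n) = fst (run P x y2 e2 n)"
  using assms
proof (induction n)
  case (Suc n)
  show ?case
  proof (cases "k = Suc n")
    case False
    with Suc have "fst (run P x y1 e1 n) = fst (run P x y2 e2 n)"
      and "speaker P x y1 e1 n = speaker P x y2 e2 n \<and>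
             (speaker P x y1 e1 n = Bob \<longrightarrow> e1 n \<and> e2 n)"
      by auto
    then show ?thesis
      unfolding fst_run_Suc by (cases "speaker P x y1 e1 n") (simp_all add: speaker_def)
  qed (use Suc in simp)
qed simp

lemma snd_run_eq_if_Alice_rounds_erased:
  assumes "k \<le> n"
    and "snd (run P x1 y e1 k) = snd (run P x2 y e2 k)"
    and "\<And>m. k \<le> m \<Longrightarrow> m < n \<Longrightarrow> speaker P x1 y e1 m = speaker P x2 y e2 m \<and>
          (speaker P x1 y e1 m = Alice \<longrightarrow> e1 m \<and> e2 m)"
  shows "snd (run P x1 y e1 n) = snd (run P x2 y e2 n)"
  using assms
proof (induction n)
  case (Suc n)
  show ?case
  proof (cases "k = Suc n")
    case False
    with Suc have "snd (run P x1 y e1 n) = snd (run P x2 y e2 n)"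
      and "speaker P x1 y e1 n = speaker P x2 y e2 n \<and>
             (speaker P x1 y e1 n = Alice \<longrightarrow> e1 n \<and> e2 n)"
      by auto
    then show ?thesis
      unfolding snd_run_Suc by (cases "speaker P x1 y e1 n") (simp_all add: speaker_def)
  qed (use Suc in simp)
qed simp

lemma robust_speaker_eq_nextB:
  "robust P \<Longrightarrow> n < rounds P \<Longrightarrow> speaker P x y e n = nextB P y (snd (run P x y e n))"
  unfolding robust_def speaker_def by blast

lemma speaker_eq_if_erasures_differ_at:
  assumes rob: "robust P" and n: "n < rounds P" and "j < n"
    and agree: "\<And>i. i < j \<Longrightarrow> e i = e' i"
    and erased: "\<And>i. j < i \<Longrightarrow> i < n \<Longrightarrow> e i \<and> e' i"
    and earlier: "\<And>m. m < n \<Longrightarrow> speaker P x y e m = speaker P x y e' m"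
  shows "speaker P x y e n = speaker P x y e' n"
proof -
  have run_j: "run P x y e j = run P x y e' j"
    by (rule run_cong_erasures) (use agree in blast)
  have later_erased: "e m \<and> e' m" if "j \<le> m" "m < n" "speaker P x y e m \<noteq> speaker P x y e j" for m
    using that erased by (cases "m = j") auto
  show ?thesis
  proof (cases "speaker P x y e j")
    case Alice
    have "fst (run P x y e n) = fst (run P x y e' n)"
      by (rule fst_run_eq_if_Bob_rounds_erased[where k = j])
        (use \<open>j < n\<close> run_j earlier later_erased Alice in auto)
    then show ?thesis by (simp add: speaker_def)
  next
    case Bob
    have "snd (run P x y e n) = snd (run P x y e' n)"
      by (rule snd_run_eq_if_Alice_rounds_erased[where k = j])
        (use \<open>j < n\<close> run_j earlier later_erased Bob in auto)
    then show ?thesis using robust_speaker_eq_nextB[OF rob n] by metis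
  qed
qed

lemma speaker_eq_all_erased:
  assumes rob: "robust P" and n: "n < rounds P" and fixed: "order_fixed_below P n"
  shows "speaker P x y e n = speaker P x y (\<lambda>_. True) n"
proof -
  define erased_from where "erased_from k = (\<lambda>i. if i < k then e i else True)" for k
  have "speaker P x y (erased_from k) n = speaker P x y (\<lambda>_. True) n" if "k \<le> n" for k
    using that
  proof (induction k)
    case (Suc k)
    have "speaker P x y (erased_from (Suc k)) n = speaker P x y (erased_from k) n"
      by (rule speaker_eq_if_erasures_differ_at[OF rob n, where j = k])
        (use Suc.prems fixed in \<open>auto simp: erased_from_def order_fixed_below_def\<close>)
    with Suc show ?case by simp
  qed (simp add: erased_from_def)
  moreover have "run P x y (erased_from n) n = run P x y e n"
    by (rule run_cong_erasures) (simp add: erased_from_def)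
  ultimately show ?thesis by (metis order.refl speaker_def)
qed

lemma speaker_all_erased_indep_inputs:
  assumes rob: "robust P" and n: "n < rounds P" and fixed: "order_fixed_below P n"
  shows "speaker P x y (\<lambda>_. True) n = speaker P x' y' (\<lambda>_. True) n"
proof -
  have "fst (run P x y (\<lambda>_. True) n) = fst (run P x y' (\<lambda>_. True) n)"
    by (rule fst_run_eq_if_Bob_rounds_erased[where k = 0])
      (use fixed in \<open>auto simp: order_fixed_below_def\<close>)
  moreover have "snd (run P x y' (\<lambda>_. True) n) = snd (run P x' y' (\<lambda>_. True) n)"
    by (rule snd_run_eq_if_Alice_rounds_erased[where k = 0])
      (use fixed in \<open>auto simp: order_fixed_below_def\<close>)
  ultimately show ?thesis
    using robust_speaker_eq_nextB[OF rob n] unfolding speaker_def by metis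
qed

lemma robust_order_fixed_below:
  assumes rob: "robust P"
  shows "n \<le> rounds P \<Longrightarrow> order_fixed_below P n"
proof (induction n)
  case (Suc n)
  then have n: "n < rounds P" and fixed: "order_fixed_below P n" by auto
  have "speaker P x y e n = speaker P x' y' e' n" for x y e x' y' e'
    using speaker_eq_all_erased[OF rob n fixed] speaker_all_erased_indep_inputs[OF rob n fixed]
    by metis
  with fixed show ?case by (auto simp: order_fixed_below_def less_Suc_eq)
qed (simp add: order_fixed_below_def)

theorem mainTheorem9:
  fixes P :: "('x, 'y, 'a) protocol"
  assumes "robust P"
  shows "fixed_order P"
proof -
  have "speaker P x y e n = speaker P undefined undefined (\<lambda>_. True) n"
    if "n < rounds P" for x y e n
    using robust_order_fixed_below[OF assms, of "Suc n"] that
    unfolding order_fixed_below_def by auto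
  then show ?thesis unfolding fixed_order_def by blast
qed

end
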